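(* Let $\alpha:\mathbb{R}\rightarrow\mathbb{R}$ be a $C^2$ function all of whose zeros are simple, i.e. on the set $\mathcal{X}:=\{x\in\mathbb{R} \mid \alpha(x)=0\}$ one has $\alpha'(x)\neq 0$. Define $f:\mathbb{R}^2\rightarrow\mathbb{R}$ by \[ f(x,y) := \left(\alpha(x) - \left[\alpha(x)-\alpha'(x)\right]^2 y\right)^2 - A(x), \] where $A$ is any antiderivative of $x\mapsto \alpha(x)\left[\alpha(x)-\alpha'(x)\right]$. Let $\mathcal{C}(f):=\{(x,y)\mid f_x(x,y)=f_y(x,y)=0\}$ be the set of critical points of $f$. Then: (1) $\mathcal{C}(f) = \mathcal{X}\times\{0\}$; (2) at each point of $\mathcal{C}(f)$ the Hessian of $f$ is positive definite. Consequently, $f$ has local minima at the points of $\mathcal{X}\times\{0\}$ and no other critical points. *)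

theory Defs
  imports "HOL-Analysis.Analysis"
begin

definition partial_x :: "(real \<times> real \<Rightarrow> real) \<Rightarrow> real \<times> real \<Rightarrow> real" where
  "partial_x f p = deriv (\<lambda>t. f (t, snd p)) (fst p)"

definition partial_y :: "(real \<times> real \<Rightarrow> real) \<Rightarrow> real \<times> real \<Rightarrow> real" where
  "partial_y f p = deriv (\<lambda>t. f (fst p, t)) (snd p)"

definition critical_points :: "(real \<times> real \<Rightarrow> real) \<Rightarrow> (real \<times> real) set" where
  "critical_points f = {p. partial_x f p = 0 \<and> partial_y f p = 0}"

definition hessian :: "(real \<times> real \<Rightarrow> real) \<Rightarrow> real \<times> real \<Rightarrow> real^2^2" where
  "hessian f p =
     vector [vector [partial_x (partial_x f) p, partial_y (partial_x f) p],
             vector [partial_x (partial_y f) p, partial_y (partial_y f) p]]"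

definition pos_def :: "real^2^2 \<Rightarrow> bool" where
  "pos_def M \<longleftrightarrow> (\<forall>v::real^2. v \<noteq> 0 \<longrightarrow> v \<bullet> (M *v v) > 0)"

end

theory Submission
  imports Defs
begin

text \<open>Write \<open>f = g\<^sup>2 - A\<close> with \<open>g(x, y) = \<alpha>(x) - (\<alpha>(x) - \<alpha>'(x))\<^sup>2 y\<close>. Since
  \<open>f\<^sub>y = -2 (\<alpha> - \<alpha>')\<^sup>2 g\<close>, at a critical point either \<open>\<alpha> = \<alpha>'\<close>, and then \<open>f\<^sub>x = 2 \<alpha>\<^sup>2\<close>
  forces a double zero, or \<open>g = 0\<close>, and then \<open>f\<^sub>x = -\<alpha> (\<alpha> - \<alpha>')\<close> forces \<open>\<alpha> = 0\<close> and \<open>y = 0\<close>.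
  At \<open>(x\<^sub>0, 0)\<close> with \<open>\<alpha>(x\<^sub>0) = 0\<close> and \<open>b = \<alpha>'(x\<^sub>0)\<close> the Hessian is
  \<open>((3b\<^sup>2, -2b\<^sup>3), (-2b\<^sup>3, 2b\<^sup>4))\<close>, of determinant \<open>2b\<^sup>6 > 0\<close>.
  Finally \<open>f \<ge> -A\<close> with equality at \<open>(x\<^sub>0, 0)\<close>, and \<open>A\<close> has a local maximum at \<open>x\<^sub>0\<close>:
  near \<open>x\<^sub>0\<close> the sign of \<open>\<alpha>\<close> is that of \<open>b (x - x\<^sub>0)\<close> while \<open>\<alpha> - \<alpha>'\<close> has the sign of \<open>-b\<close>,
  so \<open>A' = \<alpha> (\<alpha> - \<alpha>')\<close> changes sign from \<open>+\<close> to \<open>-\<close> at \<open>x\<^sub>0\<close>.\<close>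

lemma nondecreasing_near_point:
  fixes g g' :: "real \<Rightarrow> real"
  assumes deriv: "\<And>z. dist z x0 < e \<Longrightarrow> (g has_real_derivative g' z) (at z)"
    and nonneg: "\<And>z. dist z x0 < e \<Longrightarrow> g' z \<ge> 0"
    and x: "dist x x0 < e"
  shows "(g x - g x0) * (x - x0) \<ge> 0"
proof (cases "x0 \<le> x")
  case True
  have "g x0 \<le> g x"
  proof (rule DERIV_nonneg_imp_nondecreasing[OF True])
    fix z assume "x0 \<le> z" "z \<le> x"
    with x have "dist z x0 < e" by (simp add: dist_real_def)
    with deriv nonneg show "\<exists>y. DERIV g z :> y \<and> y \<ge> 0" by blast
  qed
  with True show ?thesis by simp
next
  case False
  have "g x \<le> g x0"
  proof (rule DERIV_nonneg_imp_nondecreasing[of x x0 g])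
    show "x \<le> x0" using False by simp
    fix z assume "x \<le> z" "z \<le> x0"
    with x have "dist z x0 < e" by (simp add: dist_real_def dist_commute)
    with deriv nonneg show "\<exists>y. DERIV g z :> y \<and> y \<ge> 0" by blast
  qed
  with False show ?thesis by (simp add: mult_nonpos_nonpos)
qed

lemma local_max_of_derivative_sign_change:
  fixes g g' :: "real \<Rightarrow> real"
  assumes deriv: "\<And>z. dist z x0 < e \<Longrightarrow> (g has_real_derivative g' z) (at z)"
    and sign: "\<And>z. dist z x0 < e \<Longrightarrow> g' z * (z - x0) \<le> 0"
    and x: "dist x x0 < e"
  shows "g x \<le> g x0"
proof -
  have cont: "continuous_on {a..b} g" if "dist a x0 < e" "dist b x0 < e" for a b
    using that by (intro continuous_at_imp_continuous_on ballI DERIV_isCont[OF deriv])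
                  (auto simp: dist_real_def)
  show ?thesis
  proof (cases "x0 \<le> x")
    case True
    show ?thesis
    proof (rule DERIV_nonpos_imp_decreasing_open[OF True _ cont])
      fix z assume "x0 < z" "z < x"
      with x sign[of z] deriv[of z] show "\<exists>y. DERIV g z :> y \<and> y \<le> 0"
        by (auto simp: dist_real_def mult_le_0_iff)
    qed (use x in \<open>auto simp: dist_real_def\<close>)
  next
    case False
    show ?thesis
    proof (rule DERIV_nonneg_imp_increasing_open[OF _ _ cont])
      fix z assume "x < z" "z < x0"
      with x sign[of z] deriv[of z] show "\<exists>y. DERIV g z :> y \<and> y \<ge> 0"
        by (auto simp: dist_real_def mult_le_0_iff)
    qed (use False x in \<open>auto simp: dist_real_def\<close>)
  qed
qed

lemma sign_near_simple_zero:
  fixes g g' :: "real \<Rightarrow> real"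
  assumes deriv: "\<And>z. (g has_real_derivative g' z) (at z)"
    and cont: "isCont g' x0" and zero: "g x0 = 0" and simple: "g' x0 \<noteq> 0"
  shows "\<forall>\<^sub>F z in nhds x0. g z * g' x0 * (z - x0) \<ge> 0"
proof -
  have "(g' \<longlongrightarrow> g' x0) (nhds x0)"
    using cont unfolding isCont_def tendsto_at_iff_tendsto_nhds .
  then have "((\<lambda>z. g' z * g' x0) \<longlongrightarrow> g' x0 * g' x0) (nhds x0)"
    by (rule tendsto_mult_right)
  moreover have "g' x0 * g' x0 > 0"
    using simple by (simp flip: power2_eq_square)
  ultimately have "\<forall>\<^sub>F z in nhds x0. g' z * g' x0 > 0"
    by (rule order_tendstoD(1))
  then obtain e where "e > 0" and pos: "\<And>z. dist z x0 < e \<Longrightarrow> g' z * g' x0 > 0"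
    unfolding eventually_nhds_metric by auto
  have "g z * g' x0 * (z - x0) \<ge> 0" if "dist z x0 < e" for z
  proof -
    have "(g z * g' x0 - g x0 * g' x0) * (z - x0) \<ge> 0"
    proof (rule nondecreasing_near_point[OF _ _ that])
      fix t
      show "((\<lambda>t. g t * g' x0) has_real_derivative g' t * g' x0) (at t)"
        using deriv by (rule DERIV_cmult_right)
      show "dist t x0 < e \<Longrightarrow> g' t * g' x0 \<ge> 0"
        using pos by (simp add: less_imp_le)
    qed
    with zero show ?thesis by simp
  qed
  with \<open>e > 0\<close> show ?thesis
    unfolding eventually_nhds_metric by auto
qed

lemma partial_x_eqI: "((\<lambda>t. f (t, y)) has_real_derivative D) (at x) \<Longrightarrow> partial_x f (x, y) = D"
  unfolding partial_x_def by (simp add: DERIV_imp_deriv)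

lemma partial_y_eqI: "((\<lambda>t. f (x, t)) has_real_derivative D) (at y) \<Longrightarrow> partial_y f (x, y) = D"
  unfolding partial_y_def by (simp add: DERIV_imp_deriv)

lemma quadratic_form_2x2:
  fixes a c d :: real and v :: "real^2"
  shows "v \<bullet> (vector [vector [a, c], vector [c, d]] *v v) = a * (v$1)\<^sup>2 + 2 * c * v$1 * v$2 + d * (v$2)\<^sup>2"
    by (simp add: inner_vec_def matrix_vector_mult_def sum_2 power2_eq_square algebra_simps)

lemma quadratic_form_pos:
  fixes a c d x y :: real
  assumes "a > 0" and "c\<^sup>2 < a * d" and "x \<noteq> 0 \<or> y \<noteq> 0"
  shows "a * x\<^sup>2 + 2 * c * x * y + d * y\<^sup>2 > 0"
proof -
  have completed_square:
    "a * (a * x\<^sup>2 + 2 * c * x * y + d * y\<^sup>2) = (a * x + c * y)\<^sup>2 + (a * d - c\<^sup>2) * y\<^sup>2"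
    by (simp add: power2_eq_square algebra_simps)
  have "(a * x + c * y)\<^sup>2 + (a * d - c\<^sup>2) * y\<^sup>2 > 0"
  proof (cases "y = 0")
    case True
    with assms(3) have "x \<noteq> 0" by simp
    with \<open>a > 0\<close> have "(a * x)\<^sup>2 > 0" by simp
    with True show ?thesis by simp
  next
    case False
    with assms have "(a * d - c\<^sup>2) * y\<^sup>2 > 0" by simp
    then show ?thesis by (simp add: add_nonneg_pos)
  qed
  then show ?thesis
    unfolding completed_square[symmetric] using \<open>a > 0\<close> by (rule zero_less_mult_pos)
qed

lemma pos_def_2x2:
  fixes a c d :: real
  assumes "a > 0" and "c\<^sup>2 < a * d"
  shows "pos_def (vector [vector [a, c], vector [c, d]])"
  unfolding pos_def_def quadratic_form_2x2
proof (intro allI impI)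
  fix v :: "real^2"
  assume "v \<noteq> 0"
  then have "v$1 \<noteq> 0 \<or> v$2 \<noteq> 0"
    by (auto simp: vec_eq_iff forall_2)
  with assms show "a * (v$1)\<^sup>2 + 2 * c * v$1 * v$2 + d * (v$2)\<^sup>2 > 0"
    by (rule quadratic_form_pos)
qed

locale simple_zero_potential =
  fixes \<alpha> \<alpha>' \<alpha>'' A :: "real \<Rightarrow> real"
    and f :: "real \<times> real \<Rightarrow> real"
  assumes deriv_\<alpha>: "\<And>x. (\<alpha> has_real_derivative \<alpha>' x) (at x)"
    and deriv_\<alpha>': "\<And>x. (\<alpha>' has_real_derivative \<alpha>'' x) (at x)"
    and simple_zeros: "\<And>x. \<alpha> x = 0 \<Longrightarrow> \<alpha>' x \<noteq> 0"
    and deriv_A: "\<And>x. (A has_real_derivative \<alpha> x * (\<alpha> x - \<alpha>' x)) (at x)"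
    and f_eq: "\<And>x y. f (x, y) = (\<alpha> x - (\<alpha> x - \<alpha>' x)\<^sup>2 * y)\<^sup>2 - A x"
begin

lemmas derivs_within =
  deriv_\<alpha>[THEN has_field_derivative_at_within]
  deriv_\<alpha>'[THEN has_field_derivative_at_within]
  deriv_A[THEN has_field_derivative_at_within]

definition f_x :: "real \<Rightarrow> real \<Rightarrow> real" where
  "f_x x y = 2 * (\<alpha> x - (\<alpha> x - \<alpha>' x)\<^sup>2 * y) * (\<alpha>' x - 2 * (\<alpha> x - \<alpha>' x) * (\<alpha>' x - \<alpha>'' x) * y)
     - \<alpha> x * (\<alpha> x - \<alpha>' x)"

definition f_y :: "real \<Rightarrow> real \<Rightarrow> real" where
  "f_y x y = - 2 * (\<alpha> x - \<alpha>' x)\<^sup>2 * (\<alpha> x - (\<alpha> x - \<alpha>' x)\<^sup>2 * y)"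

lemma partial_x_f: "partial_x f (x, y) = f_x x y"
  by (rule partial_x_eqI)
     (auto simp: f_eq f_x_def power2_eq_square algebra_simps intro!: derivative_eq_intros derivs_within)

lemma partial_y_f: "partial_y f (x, y) = f_y x y"
  by (rule partial_y_eqI)
     (auto simp: f_eq f_y_def power2_eq_square algebra_simps intro!: derivative_eq_intros)

lemma critical_point_coordinates:
  assumes fx: "f_x x y = 0" and fy: "f_y x y = 0"
  shows "\<alpha> x = 0 \<and> y = 0"
proof (cases "\<alpha> x = \<alpha>' x")
  case True
  with fx have "\<alpha> x = 0"
    by (simp add: f_x_def)
  with True simple_zeros show ?thesis by auto
next
  case False
  with fy have \<alpha>_eq: "\<alpha> x = (\<alpha> x - \<alpha>' x)\<^sup>2 * y"
    by (simp add: f_y_def)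
  with fx False have "\<alpha> x = 0"
    by (simp add: f_x_def)
  with \<alpha>_eq False show ?thesis by simp
qed

lemma critical_points_f: "critical_points f = {x. \<alpha> x = 0} \<times> {0}"
  using critical_point_coordinates
  by (auto simp: critical_points_def partial_x_f partial_y_f f_x_def f_y_def)

lemma hessian_f:
  assumes "\<alpha> x = 0"
  shows "hessian f (x, 0) =
    vector [vector [3 * (\<alpha>' x)\<^sup>2, - 2 * (\<alpha>' x) ^ 3], vector [- 2 * (\<alpha>' x) ^ 3, 2 * (\<alpha>' x) ^ 4]]"
proof -
  have "partial_x f = (\<lambda>p. f_x (fst p) (snd p))" "partial_y f = (\<lambda>p. f_y (fst p) (snd p))"
    by (auto simp: fun_eq_iff partial_x_f partial_y_f)
  moreover have "partial_x (\<lambda>p. f_x (fst p) (snd p)) (x, 0) = 3 * (\<alpha>' x)\<^sup>2"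
    by (rule partial_x_eqI) (auto simp: f_x_def assms power2_eq_square algebra_simps
                                  intro!: derivative_eq_intros derivs_within)
  moreover have "partial_y (\<lambda>p. f_x (fst p) (snd p)) (x, 0) = - 2 * (\<alpha>' x) ^ 3"
    by (rule partial_y_eqI) (auto simp: f_x_def assms power2_eq_square power3_eq_cube algebra_simps
                                  intro!: derivative_eq_intros)
  moreover have "partial_x (\<lambda>p. f_y (fst p) (snd p)) (x, 0) = - 2 * (\<alpha>' x) ^ 3"
    by (rule partial_x_eqI) (auto simp: f_y_def assms power2_eq_square power3_eq_cube algebra_simps
                                  intro!: derivative_eq_intros derivs_within)
  moreover have "partial_y (\<lambda>p. f_y (fst p) (snd p)) (x, 0) = 2 * (\<alpha>' x) ^ 4"
    by (rule partial_y_eqI) (auto simp: f_y_def assms power4_eq_xxxx algebra_simps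
                                  intro!: derivative_eq_intros)
  ultimately show ?thesis
    by (simp add: hessian_def)
qed

lemma pos_def_hessian_f:
  assumes "p \<in> critical_points f"
  shows "pos_def (hessian f p)"
proof -
  from assms obtain x where p: "p = (x, 0)" and "\<alpha> x = 0"
    by (auto simp: critical_points_f)
  from \<open>\<alpha> x = 0\<close> have "\<alpha>' x \<noteq> 0"
    by (rule simple_zeros)
  then have "3 * (\<alpha>' x)\<^sup>2 > 0" "(- 2 * (\<alpha>' x) ^ 3)\<^sup>2 < 3 * (\<alpha>' x)\<^sup>2 * (2 * (\<alpha>' x) ^ 4)"
    by (simp_all add: power_mult_distrib flip: power_mult power_add)
  then show ?thesis
    unfolding p hessian_f[OF \<open>\<alpha> x = 0\<close>] by (rule pos_def_2x2)
qed

lemma A_local_max: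
  assumes "\<alpha> x0 = 0"
  shows "\<forall>\<^sub>F x in nhds x0. A x \<le> A x0"
proof -
  define b where "b = \<alpha>' x0"
  have "b \<noteq> 0"
    unfolding b_def using assms by (rule simple_zeros)
  have cont: "isCont \<alpha> x0" "isCont \<alpha>' x0"
    using deriv_\<alpha> deriv_\<alpha>' by (auto intro: DERIV_isCont)
  have "\<forall>\<^sub>F z in nhds x0. \<alpha> z * b * (z - x0) \<ge> 0"
    unfolding b_def using deriv_\<alpha> cont(2) assms \<open>b \<noteq> 0\<close>[unfolded b_def]
    by (rule sign_near_simple_zero)
  moreover have "\<forall>\<^sub>F z in nhds x0. (\<alpha> z - \<alpha>' z) * b < 0"
  proof (rule order_tendstoD(2))
    have "(\<alpha> \<longlongrightarrow> \<alpha> x0) (nhds x0)" "(\<alpha>' \<longlongrightarrow> \<alpha>' x0) (nhds x0)"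
      using cont unfolding isCont_def tendsto_at_iff_tendsto_nhds by simp_all
    then show "((\<lambda>z. (\<alpha> z - \<alpha>' z) * b) \<longlongrightarrow> (\<alpha> x0 - \<alpha>' x0) * b) (nhds x0)"
      by (intro tendsto_mult_right tendsto_diff)
    show "(\<alpha> x0 - \<alpha>' x0) * b < 0"
      using assms \<open>b \<noteq> 0\<close> by (simp add: b_def flip: power2_eq_square)
  qed
  ultimately have "\<forall>\<^sub>F z in nhds x0. \<alpha> z * (\<alpha> z - \<alpha>' z) * (z - x0) \<le> 0"
  proof eventually_elim
    case (elim z)
    have "(\<alpha> z * (\<alpha> z - \<alpha>' z) * (z - x0)) * b\<^sup>2 = (\<alpha> z * b * (z - x0)) * ((\<alpha> z - \<alpha>' z) * b)"
      by (simp add: power2_eq_square algebra_simps)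
    also have "\<dots> \<le> 0"
      using elim by (simp add: mult_nonneg_nonpos)
    finally show ?case
      using \<open>b \<noteq> 0\<close> by (simp add: mult_le_0_iff)
  qed
  then obtain e where "e > 0" and sign: "\<And>z. dist z x0 < e \<Longrightarrow> \<alpha> z * (\<alpha> z - \<alpha>' z) * (z - x0) \<le> 0"
    unfolding eventually_nhds_metric by auto
  have "A x \<le> A x0" if "dist x x0 < e" for x
    using deriv_A sign that by (rule local_max_of_derivative_sign_change)
  with \<open>e > 0\<close> show ?thesis
    unfolding eventually_nhds_metric by auto
qed

lemma f_lower_bound: "- A x \<le> f (x, y)"
  by (simp add: f_eq)

lemma f_local_min:
  assumes "\<alpha> x0 = 0"
  shows "\<forall>\<^sub>F q in nhds (x0, 0). f (x0, 0) \<le> f q"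
proof -
  have "filterlim fst (nhds x0) (nhds (x0, 0::real))"
    using tendsto_fst[OF filterlim_ident, of "(x0, 0::real)"] by simp
  then have "\<forall>\<^sub>F q in nhds (x0, 0::real). A (fst q) \<le> A x0"
    using A_local_max[OF assms] unfolding filterlim_iff by blast
  then show ?thesis
  proof eventually_elim
    case (elim q)
    with f_lower_bound[of "fst q" "snd q"] show ?case
      using assms by (simp add: f_eq)
  qed
qed

end

theorem lemma1:
  fixes \<alpha> \<alpha>' \<alpha>'' A :: "real \<Rightarrow> real"
    and f :: "real \<times> real \<Rightarrow> real"
  assumes d1: "\<And>x. (\<alpha> has_real_derivative \<alpha>' x) (at x)"
    and d2: "\<And>x. (\<alpha>' has_real_derivative \<alpha>'' x) (at x)"
    and c2: "continuous_on UNIV \<alpha>''"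
    and simple: "\<And>x. \<alpha> x = 0 \<Longrightarrow> \<alpha>' x \<noteq> 0"
    and antider: "\<And>x. (A has_real_derivative \<alpha> x * (\<alpha> x - \<alpha>' x)) (at x)"
    and f_def: "\<And>x y. f (x, y) = (\<alpha> x - (\<alpha> x - \<alpha>' x)\<^sup>2 * y)\<^sup>2 - A x"
  shows "critical_points f = {x. \<alpha> x = 0} \<times> {0}
    \<and> (\<forall>p \<in> critical_points f. pos_def (hessian f p))
    \<and> (\<forall>p \<in> {x. \<alpha> x = 0} \<times> {0}. \<exists>e>0. \<forall>q. dist q p < e \<longrightarrow> f p \<le> f q)"
proof -
  interpret simple_zero_potential \<alpha> \<alpha>' \<alpha>'' A f
    using d1 d2 simple antider f_def by unfold_locales
  show ?thesis
    using critical_points_f pos_def_hessian_f f_local_min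
    by (auto simp: eventually_nhds_metric dist_commute)
qed

end
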